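(* Let $D\subset\mathbb R$, $f:D\to\mathbb F$, and $t_1,t_2\in D$ with $g(t_1)=g(t_2)$. Then $f$ is $g$-continuous at $t_1$ if and only if $f$ is $g$-continuous at $t_2$, and in that case $f(t_1)=f(t_2)$.
   Context: $g:\mathbb R\to\mathbb R$ is nondecreasing and left-continuous, $\mathbb F\in\{\mathbb R,\mathbb C\}$. A function $f:D\subset\mathbb R\to\mathbb F$ is $g$-continuous at $t\in D$ if for every $\varepsilon>0$ there is $\delta>0$ such that $|f(t)-f(s)|<\varepsilon$ for every $s\in D$ with $|g(t)-g(s)|<\delta$. *)

theory Defs
  imports "HOL-Analysis.Analysis"
begin

definition g_continuous_at ::
  "(real \<Rightarrow> real) \<Rightarrow> real set \<Rightarrow> (real \<Rightarrow> 'a::real_normed_vector) \<Rightarrow> real \<Rightarrow> bool" where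
  "g_continuous_at g D f t \<longleftrightarrow>
     (\<forall>\<epsilon>>0. \<exists>\<delta>>0. \<forall>s\<in>D. \<bar>g t - g s\<bar> < \<delta> \<longrightarrow> norm (f t - f s) < \<epsilon>)"

end

theory Submission
  imports Defs
begin

text \<open>The definition of g-continuity at t only involves t through g t and f t, and
  a point s with g s = g t lies within every g-distance of t, which forces f s = f t.\<close>

lemma g_continuous_at_cong:
  assumes "g t1 = g t2" and "f t1 = f t2"
  shows "g_continuous_at g D f t1 \<longleftrightarrow> g_continuous_at g D f t2"
  using assms unfolding g_continuous_at_def by simp

lemma g_continuous_at_imp_eq:
  assumes cont: "g_continuous_at g D f t1" and "t2 \<in> D" and "g t1 = g t2"
  shows "f t1 = f t2"
proof (rule ccontr)
  assume "f t1 \<noteq> f t2"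
  then have "norm (f t1 - f t2) > 0" by simp
  with cont obtain \<delta> where "\<delta> > 0"
    and "\<forall>s\<in>D. \<bar>g t1 - g s\<bar> < \<delta> \<longrightarrow> norm (f t1 - f s) < norm (f t1 - f t2)"
    unfolding g_continuous_at_def by blast
  with \<open>t2 \<in> D\<close> \<open>g t1 = g t2\<close> show False by force
qed

theorem lemma2p15:
  fixes g :: "real \<Rightarrow> real" and D :: "real set" and f :: "real \<Rightarrow> 'a::real_normed_vector"
    and t1 t2 :: real
  assumes "mono g"
    and "\<And>t. continuous (at_left t) g"
    and "t1 \<in> D" and "t2 \<in> D"
    and "g t1 = g t2"
  shows "(g_continuous_at g D f t1 \<longleftrightarrow> g_continuous_at g D f t2)
    \<and> (g_continuous_at g D f t1 \<longrightarrow> f t1 = f t2)"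
proof -
  have "g_continuous_at g D f t1 \<Longrightarrow> f t1 = f t2"
    using g_continuous_at_imp_eq assms(4,5) by blast
  moreover have "g_continuous_at g D f t2 \<Longrightarrow> f t1 = f t2"
    using g_continuous_at_imp_eq[of g D f t2 t1] assms(3,5) by simp
  ultimately show ?thesis
    using g_continuous_at_cong[of g t1 t2 f D] assms(5) by blast
qed

end
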